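(* Let $\epsilon\in(0,1/2)$ and $\delta\in(0,1/2]$. Let $N\ge s$ be integers with $s\ge 10\epsilon^{-2}\ln(1/\delta)$. Let $w_1,\dots,w_N>0$ be weights with total $W=\sum_{i=1}^N w_i$, such that $w_i\le\frac{\epsilon}{2s}W$ for all $i$. Let $t_1,\dots,t_N$ be i.i.d. exponential random variables with rate $1$, set $v_i=w_i/t_i$, and let $u$ be the $s$-th largest of $v_1,\dots,v_N$. Then $$\Pr\!\left[\,\Big|\frac{s\,u}{W}-1\Big|\le 2\epsilon\right]\ge 1-\delta.$$
   Context: An exponential random variable with rate $1$ has density $e^{-x}$ for $x\ge 0$. *)

theory Defs
  imports "HOL-Probability.Probability"
begin

definition kth_largest :: "nat \<Rightarrow> (nat \<Rightarrow> real) \<Rightarrow> nat \<Rightarrow> real" where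
  "kth_largest k v N = rev (sort (map v [0..<N])) ! (k - 1)"

end

theory Submission
  imports Defs
begin

(*
  For c > 0, u \<ge> c iff at least s of the
  independent events 0 < t_i \<le> w_i / c occur, and these have probabilities 1 - exp (-w_i / c).
  At c = (1 + 2\<epsilon>) W / s the expected number of occurrences is at most s / (1 + 2\<epsilon>); at
  c = (1 - 2\<epsilon>) W / s it is at least s / (1 - 3\<epsilon>/2), because every w_i / c is small (this is
  where w_i \<le> \<epsilon> W / (2s) enters). The multiplicative Chernoff bound then makes each of the two
  tails at most exp (-\<epsilon>\<^sup>2 s / 2) \<le> \<delta> / 2.
*)

lemma Chernoff_upper_exponent_le:
  fixes e s p :: real
  assumes "0 < e" "e < 1/2" "0 < s" "0 \<le> p" "p \<le> s / (1 + 2*e)"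
  shows "- e * s + (exp e - 1) * p \<le> - (e^2 * s / 2)"
proof -
  have "(exp e - 1) * p \<le> (e + e^2) * (s / (1 + 2*e))"
    using exp_bound[of e] exp_ge_add_one_self[of e] assms by (intro mult_mono) auto
  also have "\<dots> = e * s - e^2 * s / (1 + 2*e)"
    using assms by (simp add: field_simps power2_eq_square)
  also have "e^2 * s / 2 \<le> e^2 * s / (1 + 2*e)"
    using assms by (intro divide_left_mono) auto
  ultimately show ?thesis by linarith
qed

lemma Chernoff_lower_exponent_le:
  fixes e s q :: real
  assumes "0 < e" "e < 1/2" "0 < s" "s / (1 - 3*e/2) \<le> q"
  shows "e * s + (exp (-e) - 1) * q \<le> - (e^2 * s / 2)"
proof -
  have "exp (-e) \<le> 1 / (1 + e)"
    using exp_ge_add_one_self[of e] assms by (simp add: exp_minus field_simps)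
  then have "exp (-e) - 1 \<le> - (e / (1 + e))"
    using assms by (simp add: field_simps)
  moreover have "0 \<le> q"
    using assms divide_nonneg_pos[of s "1 - 3*e/2"] by linarith
  ultimately have "(exp (-e) - 1) * q \<le> - (e / (1 + e)) * q"
    by (intro mult_right_mono)
  also have "\<dots> \<le> - (e / (1 + e)) * (s / (1 - 3*e/2))"
    using assms by (intro mult_left_mono_neg) auto
  also have "\<dots> \<le> - (e * s * (1 + e/2))"
  proof -
    \<comment> \<open>the product expands to \<open>1 - 7e\<^sup>2/4 - 3e\<^sup>3/4\<close>\<close>
    have "(1 + e/2) * ((1 + e) * (1 - 3*e/2)) \<le> 1"
      using assms by (simp add: algebra_simps power2_eq_square)
    then have "e * s * (1 + e/2) * ((1 + e) * (1 - 3*e/2)) \<le> e * s"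
      using assms by (metis mult.assoc mult_left_mono mult_nonneg_nonneg less_eq_real_def mult.right_neutral)
    moreover have "0 < (1 + e) * (1 - 3*e/2)"
      using assms by simp
    ultimately have "e * s * (1 + e/2) \<le> e * s / ((1 + e) * (1 - 3*e/2))"
      by (simp add: pos_le_divide_eq)
    then show ?thesis
      by simp
  qed
  finally show ?thesis
    by (simp add: algebra_simps power2_eq_square)
qed

lemma one_minus_exp_neg_ge:
  fixes y r :: real
  assumes "0 \<le> y" "y \<le> r"
  shows "y / (1 + r) \<le> 1 - exp (- y)"
proof -
  have "exp (-y) \<le> 1 / (1 + y)"
    using exp_ge_add_one_self[of y] assms by (simp add: exp_minus field_simps)
  moreover have "y / (1 + r) \<le> y / (1 + y)"
    using assms by (intro divide_left_mono) auto
  moreover have "1 - 1 / (1 + y) = y / (1 + y)"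
    using assms by (simp add: field_simps)
  ultimately show ?thesis
    by linarith
qed

lemma exp_neg_le_half_confidence:
  fixes e d s :: real
  assumes "0 < e" "0 < d" "d \<le> 1/2" "10 * e powi (-2) * ln (1 / d) \<le> s"
  shows "exp (- (e^2 * s / 2)) \<le> d / 2"
proof -
  have "5 * ln (1 / d) \<le> e^2 * s / 2"
    using assms by (simp add: power_int_minus_divide field_simps)
  moreover have "ln 2 \<le> ln (1 / d)"
    using assms by (subst ln_le_cancel_iff) (auto simp: field_simps)
  moreover have "0 < ln (2::real)"
    by simp
  ultimately have "- (e^2 * s / 2) \<le> ln (d / 2)"
    using assms by (simp add: ln_div, linarith)
  then show ?thesis
    using assms by (metis exp_le_cancel_iff exp_ln half_gt_zero)
qed

lemma kth_largest_pred_iff_card: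
  fixes v :: "nat \<Rightarrow> real"
  assumes up: "\<And>x y. P x \<Longrightarrow> x \<le> y \<Longrightarrow> P y" and s: "1 \<le> s" "s \<le> N"
  shows "P (kth_largest s v N) \<longleftrightarrow> s \<le> card {i. i < N \<and> P (v i)}"
proof -
  define L where "L = rev (sort (map v [0..<N]))"
  have len: "length L = N" by (simp add: L_def)
  have antimono: "L ! j \<le> L ! i" if "i \<le> j" "j < N" for i j
  proof -
    have "sorted_wrt (\<ge>) L"
      unfolding L_def sorted_wrt_rev using sorted_sort[of "map v [0..<N]"] by simp
    then show ?thesis
      using sorted_wrt_nth_less[of "(\<ge>)" L i j] that len by (cases "i = j") auto
  qed
  define K where "K = {j. j < N \<and> P (L ! j)}"
  have "card K = length (filter P L)"
    by (simp add: K_def length_filter_conv_card len)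
  also have "\<dots> = length (filter P (map v [0..<N]))"
    unfolding L_def by (metis mset_filter mset_rev mset_sort size_mset)
  also have "\<dots> = card {i. i < N \<and> P (v i)}"
    by (simp add: length_filter_conv_card cong: conj_cong)
  finally have card_K: "card K = card {i. i < N \<and> P (v i)}" .
  have kth: "kth_largest s v N = L ! (s - 1)" by (simp add: kth_largest_def L_def)
  have "P (L ! (s - 1)) \<longleftrightarrow> s \<le> card K"
  proof
    assume "P (L ! (s - 1))"
    then have "{..<s} \<subseteq> K"
      using s antimono up unfolding K_def by fastforce
    then show "s \<le> card K" using card_mono[of K "{..<s}"] by (simp add: K_def)
  next
    assume "s \<le> card K"
    moreover have "K \<subseteq> {..<s - 1}" if "\<not> P (L ! (s - 1))"
      using that s antimono up unfolding K_def
      by (metis (mono_tags) lessThan_iff mem_Collect_eq not_le_imp_less subsetI)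
    ultimately show "P (L ! (s - 1))"
      using s card_mono[of "{..<s - 1}" K] by fastforce
  qed
  then show ?thesis using kth card_K by simp
qed

lemma borel_measurable_kth_largest:
  assumes f: "\<And>i. i < N \<Longrightarrow> f i \<in> borel_measurable M" and s: "1 \<le> s" "s \<le> N"
  shows "(\<lambda>x. kth_largest s (\<lambda>i. f i x) N) \<in> borel_measurable M"
proof (unfold borel_measurable_iff_ge, intro allI)
  fix a
  have "{x \<in> space M. a \<le> kth_largest s (\<lambda>i. f i x) N}
      = {x \<in> space M. real s \<le> (\<Sum>i<N. of_bool (a \<le> f i x))}"
    by (simp add: kth_largest_pred_iff_card[of "(\<le>) a", OF _ s] Int_def)
  also have "\<dots> \<in> sets M"
    unfolding of_bool_def using f by measurable
  finally show "{x \<in> space M. a \<le> kth_largest s (\<lambda>i. f i x) N} \<in> sets M" .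
qed

lemma (in prob_space) exponential_distributed_prob_Ioc:
  assumes D: "distributed M lborel X (exponential_density l)" and "0 < l" "0 \<le> c"
  shows "prob {x \<in> space M. X x \<in> {0<..c}} = 1 - exp (- c * l)"
proof -
  have [measurable]: "X \<in> borel_measurable M"
    using distributed_measurable[OF D] by simp
  have "{x \<in> space M. X x \<in> {0<..c}} = {x \<in> space M. X x \<le> c} - {x \<in> space M. X x \<le> 0}"
    using \<open>0 \<le> c\<close> by auto
  also have "prob \<dots> = prob {x \<in> space M. X x \<le> c} - prob {x \<in> space M. X x \<le> 0}"
    using \<open>0 \<le> c\<close> by (intro finite_measure_Diff) auto
  also have "\<dots> = 1 - exp (- c * l)"
    using exponential_distributedD_le[OF D _ \<open>0 < l\<close>] \<open>0 \<le> c\<close> by simp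
  finally show ?thesis .
qed

lemma (in prob_space) indep_indicators_mgf:
  assumes I: "finite I" and indep: "indep_vars M' X I" and A: "\<And>i. i \<in> I \<Longrightarrow> A i \<in> sets (M' i)"
  shows "(\<integral>x. exp (l * (\<Sum>i\<in>I. indicator (A i) (X i x))) \<partial>M)
    = (\<Prod>i\<in>I. 1 + (exp l - 1) * prob {x \<in> space M. X i x \<in> A i})"
proof -
  define Y where "Y i x = exp (l * indicator (A i) (X i x))" for i x
  have Y_eq: "Y i x = 1 + (exp l - 1) * indicator {x \<in> space M. X i x \<in> A i} x"
    if "x \<in> space M" for i x
    using that by (simp add: Y_def indicator_def)
  have events: "{x \<in> space M. X i x \<in> A i} \<in> events" if "i \<in> I" for i
    using indep A[OF that] that by (auto simp: indep_vars_def)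
  have "indep_vars (\<lambda>_. borel) Y I"
    unfolding Y_def
    by (intro indep_vars_compose2[OF indep])
      (measurable, auto intro: pred_sets2 A measurable_ident_sets)
  moreover have "integrable M (Y i)" if "i \<in> I" for i
    using events[OF that]
    by (subst Bochner_Integration.integrable_cong[OF refl Y_eq])
      (auto intro!: Bochner_Integration.integrable_add integrable_mult_right
        simp: integrable_indicator_iff emeasure_finite[THEN less_top[THEN iffD1]])
  ultimately have "(\<integral>x. (\<Prod>i\<in>I. Y i x) \<partial>M) = (\<Prod>i\<in>I. \<integral>x. Y i x \<partial>M)"
    by (rule indep_vars_lebesgue_integral[OF I])
  also have "(\<integral>x. Y i x \<partial>M) = 1 + (exp l - 1) * prob {x \<in> space M. X i x \<in> A i}" if "i \<in> I" for i
    using events[OF that]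
    by (simp add: Y_eq cong: Bochner_Integration.integral_cong)
      (subst Bochner_Integration.integral_add,
        auto simp: prob_space integrable_indicator_iff emeasure_finite[THEN less_top[THEN iffD1]])
  ultimately show ?thesis
    by (simp add: Y_def sum_distrib_left exp_sum[OF I])
qed

lemma (in prob_space) indep_indicators_Chernoff:
  assumes I: "finite I" and indep: "indep_vars M' X I" and A: "\<And>i. i \<in> I \<Longrightarrow> A i \<in> sets (M' i)"
  shows "prob {x \<in> space M. l * c \<le> l * (\<Sum>i\<in>I. indicator (A i) (X i x))}
    \<le> exp (- l * c + (exp l - 1) * (\<Sum>i\<in>I. prob {x \<in> space M. X i x \<in> A i}))"
proof -
  define S where "S x = (\<Sum>i\<in>I. indicator (A i) (X i x) :: real)" for x
  define p where "p i = prob {x \<in> space M. X i x \<in> A i}" for i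
  have "{x \<in> space M. X i x \<in> A i} \<in> events" if "i \<in> I" for i
    using indep A[OF that] that by (auto simp: indep_vars_def)
  then have [measurable]: "S \<in> borel_measurable M"
    unfolding S_def by (intro borel_measurable_sum borel_measurable_indicator') auto
  have "\<bar>l * S x\<bar> \<le> \<bar>l\<bar> * card I" for x
    unfolding abs_mult S_def
    by (intro mult_left_mono) (auto intro!: sum_bounded_above[where K=1, simplified] simp: sum_nonneg)
  then have "integrable M (\<lambda>x. exp (l * S x))"
    by (intro integrable_const_bound[where B="exp (\<bar>l\<bar> * card I)"]) (auto simp: abs_le_iff)
  then have "prob {x \<in> space M. exp (l * c) \<le> exp (l * S x)}
      \<le> (\<integral>x. exp (l * S x) \<partial>M) / exp (l * c)"
    by (intro integral_Markov_inequality_measure[where A="space M"]) auto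
  also have "(\<integral>x. exp (l * S x) \<partial>M) = (\<Prod>i\<in>I. 1 + (exp l - 1) * p i)"
    unfolding S_def p_def by (rule indep_indicators_mgf[OF I indep A])
  also have "\<dots> \<le> (\<Prod>i\<in>I. exp ((exp l - 1) * p i))"
  proof (intro prod_mono conjI)
    fix i
    have "0 \<le> (1 - p i) + exp l * p i"
      unfolding p_def by (intro add_nonneg_nonneg) auto
    then show "0 \<le> 1 + (exp l - 1) * p i"
      by (simp add: algebra_simps)
    show "1 + (exp l - 1) * p i \<le> exp ((exp l - 1) * p i)"
      using exp_ge_add_one_self by (simp add: add.commute)
  qed
  also have "\<dots> = exp ((exp l - 1) * (\<Sum>i\<in>I. p i))"
    by (simp add: exp_sum[OF I] sum_distrib_left)
  finally have "prob {x \<in> space M. exp (l * c) \<le> exp (l * S x)}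
      \<le> exp ((exp l - 1) * (\<Sum>i\<in>I. p i)) / exp (l * c)"
    by (simp add: divide_right_mono)
  then show ?thesis
    by (simp add: S_def p_def add.commute flip: exp_diff)
qed

lemma le_divide_iff_mem_Ioc:
  fixes c v y :: real
  assumes "0 < c" "0 < v"
  shows "c \<le> v / y \<longleftrightarrow> y \<in> {0<..v / c}"
proof (cases "0 < y")
  case False
  then have "v / y \<le> 0"
    using assms by (simp add: divide_nonneg_nonpos)
  then show ?thesis
    using assms False by auto
qed (use assms in \<open>auto simp: field_simps\<close>)

locale exponential_weights = prob_space M for M :: "'a measure" +
  fixes t :: "nat \<Rightarrow> 'a \<Rightarrow> real" and w :: "nat \<Rightarrow> real" and N :: nat
  assumes indep: "indep_vars (\<lambda>_. borel) t {..<N}"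
    and exponential: "\<And>i. i < N \<Longrightarrow> distributed M lborel (t i) (exponential_density 1)"
    and weight_pos: "\<And>i. i < N \<Longrightarrow> 0 < w i"
begin

lemma borel_measurable_t: "i < N \<Longrightarrow> t i \<in> borel_measurable M"
  using distributed_measurable[OF exponential] by simp

definition count_above :: "real \<Rightarrow> 'a \<Rightarrow> real" where
  "count_above c x = (\<Sum>i<N. indicator {0<..w i / c} (t i x))"

lemma borel_measurable_count_above [measurable]: "count_above c \<in> borel_measurable M"
  unfolding count_above_def
proof (rule borel_measurable_sum)
  fix i assume "i \<in> {..<N}"
  then have [measurable]: "t i \<in> borel_measurable M"
    by (simp add: borel_measurable_t)
  show "(\<lambda>x. indicator {0<..w i / c} (t i x)) \<in> borel_measurable M"
    by measurable
qed

lemma le_kth_largest_iff_count_above: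
  assumes "0 < c" "1 \<le> s" "s \<le> N"
  shows "c \<le> kth_largest s (\<lambda>i. w i / t i x) N \<longleftrightarrow> real s \<le> count_above c x"
proof -
  have "{i. i < N \<and> c \<le> w i / t i x} = {..<N} \<inter> {i. t i x \<in> {0<..w i / c}}"
    using le_divide_iff_mem_Ioc[OF assms(1) weight_pos] by auto
  then show ?thesis
    using kth_largest_pred_iff_card[of "(\<le>) c", OF _ assms(2,3)]
    by (simp add: count_above_def indicator_def)
qed

lemma prob_count_above_Chernoff:
  assumes "0 < c"
  shows "prob {x \<in> space M. l * k \<le> l * count_above c x}
    \<le> exp (- l * k + (exp l - 1) * (\<Sum>i<N. 1 - exp (- (w i / c))))"
proof -
  have "prob {x \<in> space M. t i x \<in> {0<..w i / c}} = 1 - exp (- (w i / c))" if "i < N" for i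
    using exponential_distributed_prob_Ioc[OF exponential[OF that]] weight_pos[OF that] assms by simp
  then show ?thesis
    using indep_indicators_Chernoff[OF _ indep, of "\<lambda>i. {0<..w i / c}" l k]
    by (simp add: count_above_def)
qed

lemma sum_weights_pos: "0 < N \<Longrightarrow> 0 < (\<Sum>j<N. w j)"
  using weight_pos by (intro sum_pos) auto

lemma prob_kth_largest_ge:
  assumes "0 < \<epsilon>" "\<epsilon> < 1/2" "1 \<le> s" "s \<le> N"
  shows "prob {x \<in> space M. (1 + 2*\<epsilon>) * (\<Sum>j<N. w j) / s \<le> kth_largest s (\<lambda>i. w i / t i x) N}
    \<le> exp (- (\<epsilon>^2 * s / 2))"
proof -
  define W where "W = (\<Sum>j<N. w j)"
  define b where "b = (1 + 2*\<epsilon>) * W / s"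
  have "0 < W"
    unfolding W_def using assms by (intro sum_weights_pos) simp
  then have "0 < b"
    using assms unfolding b_def by simp
  have "(\<Sum>i<N. 1 - exp (- (w i / b))) \<le> (\<Sum>i<N. w i / b)"
  proof (intro sum_mono)
    fix i
    show "1 - exp (- (w i / b)) \<le> w i / b"
      using exp_ge_add_one_self[of "- (w i / b)"] by linarith
  qed
  also have "\<dots> = W / b"
    by (simp add: W_def sum_divide_distrib)
  also have "\<dots> = s / (1 + 2*\<epsilon>)"
    using \<open>0 < W\<close> assms by (simp add: b_def)
  finally have exponent: "- \<epsilon> * s + (exp \<epsilon> - 1) * (\<Sum>i<N. 1 - exp (- (w i / b))) \<le> - (\<epsilon>^2 * s / 2)"
    using assms \<open>0 < b\<close> weight_pos
    by (intro Chernoff_upper_exponent_le sum_nonneg) (auto intro!: divide_nonneg_pos less_imp_le)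
  have "{x \<in> space M. b \<le> kth_largest s (\<lambda>i. w i / t i x) N}
      = {x \<in> space M. \<epsilon> * s \<le> \<epsilon> * count_above b x}"
    using le_kth_largest_iff_count_above[OF \<open>0 < b\<close> assms(3,4)] \<open>0 < \<epsilon>\<close> by auto
  also have "prob \<dots> \<le> exp (- \<epsilon> * s + (exp \<epsilon> - 1) * (\<Sum>i<N. 1 - exp (- (w i / b))))"
    by (rule prob_count_above_Chernoff[OF \<open>0 < b\<close>])
  also have "\<dots> \<le> exp (- (\<epsilon>^2 * s / 2))"
    using exponent by simp
  finally show ?thesis
    unfolding b_def W_def .
qed

lemma prob_kth_largest_less:
  assumes "0 < \<epsilon>" "\<epsilon> < 1/2" "1 \<le> s" "s \<le> N"
    and small: "\<And>i. i < N \<Longrightarrow> w i \<le> \<epsilon> / (2 * s) * (\<Sum>j<N. w j)"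
  shows "prob {x \<in> space M. kth_largest s (\<lambda>i. w i / t i x) N < (1 - 2*\<epsilon>) * (\<Sum>j<N. w j) / s}
    \<le> exp (- (\<epsilon>^2 * s / 2))"
proof -
  define W where "W = (\<Sum>j<N. w j)"
  define a where "a = (1 - 2*\<epsilon>) * W / s"
  define r where "r = \<epsilon> / (2 * (1 - 2*\<epsilon>))"
  have "0 < W"
    unfolding W_def using assms by (intro sum_weights_pos) simp
  then have "0 < a"
    using assms unfolding a_def by simp
  have "w i / a \<le> r" if "i < N" for i
  proof -
    have "w i / a \<le> \<epsilon> / (2 * s) * W / a"
      using small[OF that] \<open>0 < a\<close> unfolding W_def by (intro divide_right_mono) auto
    also have "\<dots> = r"
      using \<open>0 < W\<close> assms by (simp add: a_def r_def field_simps)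
    finally show ?thesis .
  qed
  have "1 + r = (1 - 3*\<epsilon>/2) / (1 - 2*\<epsilon>)"
    using assms by (simp add: r_def field_simps)
  moreover have "W / a = s / (1 - 2*\<epsilon>)"
    using \<open>0 < W\<close> assms by (simp add: a_def)
  ultimately have "s / (1 - 3*\<epsilon>/2) = W / a / (1 + r)"
    using assms by simp
  also have "\<dots> = (\<Sum>i<N. (w i / a) / (1 + r))"
    by (simp add: W_def sum_divide_distrib)
  also have "\<dots> \<le> (\<Sum>i<N. 1 - exp (- (w i / a)))"
    using \<open>\<And>i. i < N \<Longrightarrow> w i / a \<le> r\<close> weight_pos \<open>0 < a\<close>
    by (intro sum_mono one_minus_exp_neg_ge) (auto intro!: divide_nonneg_pos less_imp_le)
  finally have exponent: "\<epsilon> * s + (exp (- \<epsilon>) - 1) * (\<Sum>i<N. 1 - exp (- (w i / a))) \<le> - (\<epsilon>^2 * s / 2)"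
    using assms by (intro Chernoff_lower_exponent_le) auto
  have "{x \<in> space M. kth_largest s (\<lambda>i. w i / t i x) N < a}
      \<subseteq> {x \<in> space M. (- \<epsilon>) * s \<le> (- \<epsilon>) * count_above a x}"
    using le_kth_largest_iff_count_above[OF \<open>0 < a\<close> assms(3,4)] \<open>0 < \<epsilon>\<close>
    by (auto simp flip: not_le)
  then have "prob {x \<in> space M. kth_largest s (\<lambda>i. w i / t i x) N < a}
      \<le> prob {x \<in> space M. (- \<epsilon>) * s \<le> (- \<epsilon>) * count_above a x}"
    by (intro finite_measure_mono) measurable
  also have "\<dots> \<le> exp (- (- \<epsilon>) * s + (exp (- \<epsilon>) - 1) * (\<Sum>i<N. 1 - exp (- (w i / a))))"
    by (rule prob_count_above_Chernoff[OF \<open>0 < a\<close>])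
  also have "\<dots> \<le> exp (- (\<epsilon>^2 * s / 2))"
    using exponent by simp
  finally show ?thesis
    unfolding a_def W_def .
qed

lemma prob_kth_largest_concentration:
  assumes "0 < \<epsilon>" "\<epsilon> < 1/2" "1 \<le> s" "s \<le> N"
    and "\<And>i. i < N \<Longrightarrow> w i \<le> \<epsilon> / (2 * s) * (\<Sum>j<N. w j)"
  shows "1 - 2 * exp (- (\<epsilon>^2 * s / 2))
    \<le> prob {x \<in> space M. \<bar>s * kth_largest s (\<lambda>i. w i / t i x) N / (\<Sum>j<N. w j) - 1\<bar> \<le> 2 * \<epsilon>}"
proof -
  define W where "W = (\<Sum>j<N. w j)"
  define U where "U x = kth_largest s (\<lambda>i. w i / t i x) N" for x
  define Low where "Low = {x \<in> space M. U x < (1 - 2*\<epsilon>) * W / s}"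
  define High where "High = {x \<in> space M. (1 + 2*\<epsilon>) * W / s \<le> U x}"
  have "0 < W"
    unfolding W_def using assms by (intro sum_weights_pos) simp
  have [measurable]: "U \<in> borel_measurable M"
    unfolding U_def using assms borel_measurable_t by (intro borel_measurable_kth_largest) auto
  have "space M - (Low \<union> High) \<subseteq> {x \<in> space M. \<bar>s * U x / W - 1\<bar> \<le> 2 * \<epsilon>}"
    using \<open>0 < W\<close> assms by (auto simp: Low_def High_def abs_le_iff field_simps)
  then have "prob (space M - (Low \<union> High)) \<le> prob {x \<in> space M. \<bar>s * U x / W - 1\<bar> \<le> 2 * \<epsilon>}"
    by (intro finite_measure_mono) measurable
  moreover have "prob (space M - (Low \<union> High)) = 1 - prob (Low \<union> High)"
    unfolding Low_def High_def by (intro prob_compl) measurable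
  moreover have "prob (Low \<union> High) \<le> prob Low + prob High"
    unfolding Low_def High_def by (intro measure_Un_le) measurable
  moreover have "prob Low \<le> exp (- (\<epsilon>^2 * s / 2))" "prob High \<le> exp (- (\<epsilon>^2 * s / 2))"
    unfolding Low_def High_def U_def W_def using assms
    by (intro prob_kth_largest_less prob_kth_largest_ge; simp)+
  ultimately show ?thesis
    unfolding U_def W_def by linarith
qed

end

theorem mainTheorem7:
  fixes M :: "'a measure" and t :: "nat \<Rightarrow> 'a \<Rightarrow> real" and w :: "nat \<Rightarrow> real"
    and \<epsilon> \<delta> :: real and N s :: nat
  assumes "prob_space M"
    and "0 < \<epsilon>" "\<epsilon> < 1/2" "0 < \<delta>" "\<delta> \<le> 1/2"
    and "s \<le> N" "real s \<ge> 10 * \<epsilon> powi (-2) * ln (1 / \<delta>)"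
    and "\<forall>i<N. w i > 0"
    and "\<forall>i<N. w i \<le> \<epsilon> / (2 * real s) * (\<Sum>j<N. w j)"
    and "prob_space.indep_vars M (\<lambda>_. borel) t {..<N}"
    and "\<forall>i<N. distributed M lborel (t i) (exponential_density 1)"
  shows "prob_space.prob M {x \<in> space M.
           \<bar>real s * kth_largest s (\<lambda>i. w i / t i x) N / (\<Sum>j<N. w j) - 1\<bar> \<le> 2 * \<epsilon>}
         \<ge> 1 - \<delta>"
proof -
  interpret exponential_weights M t w N
    using assms(1,8,10,11) by (simp add: exponential_weights_def exponential_weights_axioms_def)
  have "0 < ln (1 / \<delta>)"
    using assms(4,5) by (intro ln_gt_zero) (simp add: field_simps)
  then have "0 < 10 * \<epsilon> powi (-2) * ln (1 / \<delta>)"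
    using assms(2) by simp
  then have "0 < real s"
    using assms(7) by linarith
  then have "1 \<le> s"
    by simp
  then have "1 - 2 * exp (- (\<epsilon>^2 * s / 2))
      \<le> prob {x \<in> space M. \<bar>s * kth_largest s (\<lambda>i. w i / t i x) N / (\<Sum>j<N. w j) - 1\<bar> \<le> 2 * \<epsilon>}"
    using assms by (intro prob_kth_largest_concentration) auto
  moreover have "exp (- (\<epsilon>^2 * s / 2)) \<le> \<delta> / 2"
    using assms by (intro exp_neg_le_half_confidence) auto
  ultimately show ?thesis
    by linarith
qed

end
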